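(* Every discrete fibration $F:\mathcal C\to\mathcal D$ between indiscretely based categories is an almost discrete fibration.
   Context: A functor $F:\mathcal E\to\mathcal B$ is a discrete fibration if for each object $E$ of $\mathcal E$ and each morphism $f:B\to F(E)$ there is a unique morphism $g:E'\to E$ with $F(g)=f$. An $\mathbb N$-grading on a category is a functor to $\mathbb N$ (viewed as a one-object category); a category is indiscretely based if it is $\mathbb N$-graded and each connected component of its subcategory of length-zero morphisms is indiscrete. A factorization $q=g_0\circ\cdots\circ g_{n+1}$ ($n\ge0$) is nontrivial if no $g_i$ is an isomorphism. $F:\mathcal C\to\mathcal D$ is an almost discrete fibration if for every morphism $q$ of $\mathcal D$, every $p$ with $F(p)=q$ and every nontrivial factorization $q=g_0\circ\cdots\circ g_{n+1}$, there is a nontrivial factorization $p=f_0\circ\cdots\circ f_{n+1}$ with $F(f_i)=g_i$ for all $i$, unique up to the relation $(f_0,\dots,f_{n+1})\sim(f'_0,\dots,f'_{n+1})$ if there are isomorphisms $h_0,\dots,h_n$ with $f'_0=f_0\circ h_0$, $f'_i=h_{i-1}^{-1}\circ f_i\circ h_i$ ($1\le i\le n$), $f'_{n+1}=h_n^{-1}\circ f_{n+1}$. *)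

theory Defs
  imports Main
begin

record ('o, 'a) category_data =
  Obj  :: "'o set"
  Arr  :: "'a set"
  Dom  :: "'a \<Rightarrow> 'o"
  Cod  :: "'a \<Rightarrow> 'o"
  Ident :: "'o \<Rightarrow> 'a"
  Comp :: "'a \<Rightarrow> 'a \<Rightarrow> 'a"   (* Comp C g f = g \<circ> f, meaningful when Dom g = Cod f *)

definition composable :: "('o,'a) category_data \<Rightarrow> 'a \<Rightarrow> 'a \<Rightarrow> bool" where
  "composable C g f \<longleftrightarrow> g \<in> Arr C \<and> f \<in> Arr C \<and> Dom C g = Cod C f"

definition is_category :: "('o,'a) category_data \<Rightarrow> bool" where
  "is_category C \<longleftrightarrow>
     (\<forall>f\<in>Arr C. Dom C f \<in> Obj C \<and> Cod C f \<in> Obj C) \<and>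
     (\<forall>x\<in>Obj C. Ident C x \<in> Arr C \<and> Dom C (Ident C x) = x \<and> Cod C (Ident C x) = x) \<and>
     (\<forall>g f. composable C g f \<longrightarrow> Comp C g f \<in> Arr C \<and>
              Dom C (Comp C g f) = Dom C f \<and> Cod C (Comp C g f) = Cod C g) \<and>
     (\<forall>f\<in>Arr C. Comp C (Ident C (Cod C f)) f = f \<and> Comp C f (Ident C (Dom C f)) = f) \<and>
     (\<forall>h g f. composable C h g \<longrightarrow> composable C g f \<longrightarrow>
              Comp C h (Comp C g f) = Comp C (Comp C h g) f)"

definition is_functor ::
  "('o,'a) category_data \<Rightarrow> ('p,'b) category_data \<Rightarrow> ('o \<Rightarrow> 'p) \<Rightarrow> ('a \<Rightarrow> 'b) \<Rightarrow> bool" where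
  "is_functor C D Fo Fa \<longleftrightarrow> is_category C \<and> is_category D \<and>
     (\<forall>x\<in>Obj C. Fo x \<in> Obj D \<and> Fa (Ident C x) = Ident D (Fo x)) \<and>
     (\<forall>f\<in>Arr C. Fa f \<in> Arr D \<and> Dom D (Fa f) = Fo (Dom C f) \<and> Cod D (Fa f) = Fo (Cod C f)) \<and>
     (\<forall>g f. composable C g f \<longrightarrow> Fa (Comp C g f) = Comp D (Fa g) (Fa f))"

definition inverse_pair :: "('o,'a) category_data \<Rightarrow> 'a \<Rightarrow> 'a \<Rightarrow> bool" where
  "inverse_pair C h k \<longleftrightarrow> h \<in> Arr C \<and> k \<in> Arr C \<and> Dom C k = Cod C h \<and> Cod C k = Dom C h \<and>
     Comp C k h = Ident C (Dom C h) \<and> Comp C h k = Ident C (Cod C h)"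

definition is_iso :: "('o,'a) category_data \<Rightarrow> 'a \<Rightarrow> bool" where
  "is_iso C h \<longleftrightarrow> (\<exists>k. inverse_pair C h k)"

text \<open>An N-grading is a functor to N viewed as a one-object category (the monoid (N,+)).\<close>
definition is_grading :: "('o,'a) category_data \<Rightarrow> ('a \<Rightarrow> nat) \<Rightarrow> bool" where
  "is_grading C len \<longleftrightarrow>
     (\<forall>x\<in>Obj C. len (Ident C x) = 0) \<and>
     (\<forall>g f. composable C g f \<longrightarrow> len (Comp C g f) = len g + len f)"

definition zero_connected :: "('o,'a) category_data \<Rightarrow> ('a \<Rightarrow> nat) \<Rightarrow> 'o \<Rightarrow> 'o \<Rightarrow> bool" where
  "zero_connected C len x y \<longleftrightarrow>
     (\<lambda>u v. \<exists>f\<in>Arr C. len f = 0 \<and> ((Dom C f = u \<and> Cod C f = v) \<or> (Dom C f = v \<and> Cod C f = u)))\<^sup>*\<^sup>* x y"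

definition indiscretely_based :: "('o,'a) category_data \<Rightarrow> ('a \<Rightarrow> nat) \<Rightarrow> bool" where
  "indiscretely_based C len \<longleftrightarrow> is_category C \<and> is_grading C len \<and>
     (\<forall>x\<in>Obj C. \<forall>y\<in>Obj C. zero_connected C len x y \<longrightarrow>
        (\<exists>!f. f \<in> Arr C \<and> len f = 0 \<and> Dom C f = x \<and> Cod C f = y))"

definition discrete_fibration ::
  "('o,'a) category_data \<Rightarrow> ('p,'b) category_data \<Rightarrow> ('o \<Rightarrow> 'p) \<Rightarrow> ('a \<Rightarrow> 'b) \<Rightarrow> bool" where
  "discrete_fibration C D Fo Fa \<longleftrightarrow> is_functor C D Fo Fa \<and>
     (\<forall>E\<in>Obj C. \<forall>f\<in>Arr D. Cod D f = Fo E \<longrightarrow>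
        (\<exists>!g. g \<in> Arr C \<and> Cod C g = E \<and> Fa g = f))"

fun comp_list :: "('o,'a) category_data \<Rightarrow> 'a list \<Rightarrow> 'a" where
  "comp_list C [] = undefined"
| "comp_list C [g] = g"
| "comp_list C (g # gs) = Comp C g (comp_list C gs)"

definition factorization :: "('o,'a) category_data \<Rightarrow> 'a \<Rightarrow> 'a list \<Rightarrow> bool" where
  "factorization C q gs \<longleftrightarrow> length gs \<ge> 2 \<and> (\<forall>g\<in>set gs. g \<in> Arr C) \<and>
     (\<forall>i. Suc i < length gs \<longrightarrow> Dom C (gs ! i) = Cod C (gs ! Suc i)) \<and>
     comp_list C gs = q"

definition nontrivial_factorization :: "('o,'a) category_data \<Rightarrow> 'a \<Rightarrow> 'a list \<Rightarrow> bool" where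
  "nontrivial_factorization C q gs \<longleftrightarrow> factorization C q gs \<and> (\<forall>g\<in>set gs. \<not> is_iso C g)"

text \<open>The relation (f0,...,f(n+1)) ~ (f0',...,f(n+1)'): there are isomorphisms h0,...,hn
  (with inverses k0,...,kn) such that f0' = f0 \<circ> h0, fi' = h(i-1)^-1 \<circ> fi \<circ> hi (1 \<le> i \<le> n),
  f(n+1)' = hn^-1 \<circ> f(n+1).\<close>
definition fact_equiv :: "('o,'a) category_data \<Rightarrow> 'a list \<Rightarrow> 'a list \<Rightarrow> bool" where
  "fact_equiv C fs fs' \<longleftrightarrow> length fs' = length fs \<and> length fs \<ge> 2 \<and>
     (\<exists>hs ks. length hs = length fs - 1 \<and> length ks = length fs - 1 \<and>
        (\<forall>i < length hs. inverse_pair C (hs ! i) (ks ! i) \<and> Cod C (hs ! i) = Dom C (fs ! i)) \<and>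
        fs' ! 0 = Comp C (fs ! 0) (hs ! 0) \<and>
        (\<forall>i. 1 \<le> i \<and> i < length hs \<longrightarrow>
             fs' ! i = Comp C (ks ! (i - 1)) (Comp C (fs ! i) (hs ! i))) \<and>
        fs' ! (length fs - 1) = Comp C (ks ! (length fs - 2)) (fs ! (length fs - 1)))"

definition almost_discrete_fibration ::
  "('o,'a) category_data \<Rightarrow> ('p,'b) category_data \<Rightarrow> ('o \<Rightarrow> 'p) \<Rightarrow> ('a \<Rightarrow> 'b) \<Rightarrow> bool" where
  "almost_discrete_fibration C D Fo Fa \<longleftrightarrow> is_functor C D Fo Fa \<and>
     (\<forall>q\<in>Arr D. \<forall>p\<in>Arr C. \<forall>gs. Fa p = q \<longrightarrow> nontrivial_factorization D q gs \<longrightarrow>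
        (\<exists>fs. nontrivial_factorization C p fs \<and> map Fa fs = gs) \<and>
        (\<forall>fs fs'. nontrivial_factorization C p fs \<and> map Fa fs = gs \<and>
                  nontrivial_factorization C p fs' \<and> map Fa fs' = gs \<longrightarrow> fact_equiv C fs fs'))"

end

theory Submission
  imports Defs
begin

text \<open>A discrete fibration lifts every composable chain of arrows uniquely once the codomain of
  its first arrow is fixed. Lifting a factorization of F p from the codomain of p gives a chain
  whose composite is a lift of F p with the same codomain as p, hence is p; the factors are not
  isomorphisms because functors preserve isomorphisms. The lift is unique on the nose, so any two
  lifted factorizations are related by identities.\<close>

lemma category_dom_cod:
  assumes "is_category C" "f \<in> Arr C"
  shows "Dom C f \<in> Obj C" "Cod C f \<in> Obj C"
  using assms unfolding is_category_def by auto

lemma category_ident: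
  assumes "is_category C" "x \<in> Obj C"
  shows "Ident C x \<in> Arr C" "Dom C (Ident C x) = x" "Cod C (Ident C x) = x"
  using assms unfolding is_category_def by auto

lemma category_comp:
  assumes "is_category C" "composable C g f"
  shows "Comp C g f \<in> Arr C" "Cod C (Comp C g f) = Cod C g"
  using assms unfolding is_category_def by auto

lemma category_comp_ident:
  assumes "is_category C" "f \<in> Arr C"
  shows "Comp C (Ident C (Cod C f)) f = f" "Comp C f (Ident C (Dom C f)) = f"
  using assms unfolding is_category_def by auto

lemma functor_arr:
  assumes "is_functor C D Fo Fa" "f \<in> Arr C"
  shows "Fa f \<in> Arr D" "Dom D (Fa f) = Fo (Dom C f)" "Cod D (Fa f) = Fo (Cod C f)"
  using assms unfolding is_functor_def by auto

lemma inverse_pair_ident: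
  assumes "is_category C" "x \<in> Obj C"
  shows "inverse_pair C (Ident C x) (Ident C x)"
  using category_comp_ident(1)[OF assms(1) category_ident(1)[OF assms]] category_ident[OF assms]
  unfolding inverse_pair_def by simp

lemma functor_preserves_iso:
  assumes F: "is_functor C D Fo Fa" and "is_iso C f"
  shows "is_iso D (Fa f)"
proof -
  obtain k where k: "inverse_pair C f k"
    using \<open>is_iso C f\<close> unfolding is_iso_def by blast
  then have "composable C k f" "composable C f k" "Dom C f \<in> Obj C" "Cod C f \<in> Obj C"
    using F category_dom_cod unfolding is_functor_def inverse_pair_def composable_def by auto
  then have "inverse_pair D (Fa f) (Fa k)"
    using F k unfolding is_functor_def inverse_pair_def by metis
  then show ?thesis
    unfolding is_iso_def by blast
qed

fun composable_list :: "('o,'a) category_data \<Rightarrow> 'a list \<Rightarrow> bool" where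
  "composable_list C [] = True"
| "composable_list C [g] = (g \<in> Arr C)"
| "composable_list C (g # h # gs) = (g \<in> Arr C \<and> Dom C g = Cod C h \<and> composable_list C (h # gs))"

lemma composable_list_Cons:
  "composable_list C (g # gs) \<longleftrightarrow>
     g \<in> Arr C \<and> composable_list C gs \<and> (gs \<noteq> [] \<longrightarrow> Dom C g = Cod C (hd gs))"
  by (cases gs) auto

lemma composable_list_iff:
  "composable_list C gs \<longleftrightarrow> (\<forall>g\<in>set gs. g \<in> Arr C) \<and>
     (\<forall>i. Suc i < length gs \<longrightarrow> Dom C (gs ! i) = Cod C (gs ! Suc i))"
  by (induction C gs rule: composable_list.induct)
    (auto simp: nth_Cons' less_Suc_eq_0_disj All_less_Suc2 split: nat.splits)

lemma factorization_iff:
  "factorization C q gs \<longleftrightarrow> composable_list C gs \<and> length gs \<ge> 2 \<and> comp_list C gs = q"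
  unfolding factorization_def composable_list_iff by blast

lemma comp_list_Cons: "gs \<noteq> [] \<Longrightarrow> comp_list C (g # gs) = Comp C g (comp_list C gs)"
  by (cases gs) auto

lemma comp_list_arr_cod:
  assumes C: "is_category C" and "composable_list C gs" "gs \<noteq> []"
  shows "comp_list C gs \<in> Arr C \<and> Cod C (comp_list C gs) = Cod C (hd gs)"
  using assms(2,3)
proof (induction gs)
  case (Cons g gs)
  show ?case
  proof (cases "gs = []")
    case False
    with Cons have "composable C g (comp_list C gs)"
      by (auto simp: composable_list_Cons composable_def)
    with False show ?thesis
      by (simp add: comp_list_Cons category_comp[OF C])
  qed (use Cons in simp)
qed simp

lemma functor_comp_list:
  assumes F: "is_functor C D Fo Fa" and "composable_list C gs" "gs \<noteq> []"
  shows "Fa (comp_list C gs) = comp_list D (map Fa gs)"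
  using assms(2,3)
proof (induction gs)
  case (Cons g gs)
  show ?case
  proof (cases "gs = []")
    case False
    with Cons F have "composable C g (comp_list C gs)"
      using comp_list_arr_cod[of C gs]
      by (auto simp: composable_list_Cons composable_def is_functor_def)
    with False Cons F show ?thesis
      by (auto simp: comp_list_Cons composable_list_Cons is_functor_def)
  qed simp
qed simp

lemma factorization_cod:
  assumes "is_category C" "factorization C q gs"
  shows "Cod C (hd gs) = Cod C q"
proof -
  have "gs \<noteq> []" "composable_list C gs" "comp_list C gs = q"
    using assms(2) by (auto simp: factorization_iff)
  then show ?thesis
    using comp_list_arr_cod[OF assms(1), of gs] by simp
qed

lemma fact_equiv_refl:
  assumes C: "is_category C" and "composable_list C fs" "length fs \<ge> 2"
  shows "fact_equiv C fs fs"
proof -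
  define hs where "hs = map (\<lambda>f. Ident C (Dom C f)) (butlast fs)"
  have arr: "\<And>i. i < length fs \<Longrightarrow> fs ! i \<in> Arr C"
    and dom_cod: "\<And>i. Suc i < length fs \<Longrightarrow> Dom C (fs ! i) = Cod C (fs ! Suc i)"
    using assms(2) unfolding composable_list_iff by auto
  have len: "length hs = length fs - 1"
    by (simp add: hs_def)
  have hs_nth: "hs ! i = Ident C (Dom C (fs ! i))" if "i < length hs" for i
    using that by (simp add: hs_def nth_butlast)
  have left: "Comp C (hs ! (i - 1)) (fs ! i) = fs ! i" if "1 \<le> i" "i < length fs" for i
  proof -
    have "hs ! (i - 1) = Ident C (Cod C (fs ! i))"
      using hs_nth[of "i - 1"] dom_cod[of "i - 1"] that len by simp
    then show ?thesis
      using category_comp_ident(1)[OF C arr[OF \<open>i < length fs\<close>]] by simp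
  qed
  have right: "Comp C (fs ! i) (hs ! i) = fs ! i" if "i < length hs" for i
  proof -
    have "i < length fs"
      using that len by simp
    then show ?thesis
      using category_comp_ident(2)[OF C arr] hs_nth[OF that] by simp
  qed
  have "inverse_pair C (hs ! i) (hs ! i) \<and> Cod C (hs ! i) = Dom C (fs ! i)" if "i < length hs" for i
  proof -
    have "Dom C (fs ! i) \<in> Obj C"
      using category_dom_cod(1)[OF C arr] that len by simp
    then show ?thesis
      using inverse_pair_ident[OF C] category_ident(3)[OF C] hs_nth[OF that] by simp
  qed
  moreover have "fs ! 0 = Comp C (fs ! 0) (hs ! 0)"
    using right[of 0] len \<open>length fs \<ge> 2\<close> by simp
  moreover have "fs ! i = Comp C (hs ! (i - 1)) (Comp C (fs ! i) (hs ! i))"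
    if "1 \<le> i" "i < length hs" for i
    using left[of i] right[of i] that len by simp
  moreover have "fs ! (length fs - 1) = Comp C (hs ! (length fs - 2)) (fs ! (length fs - 1))"
  proof -
    have "length fs - 1 - 1 = length fs - 2"
      by simp
    then show ?thesis
      using left[of "length fs - 1"] \<open>length fs \<ge> 2\<close> by simp
  qed
  ultimately show ?thesis
    using len \<open>length fs \<ge> 2\<close> unfolding fact_equiv_def
    by (intro conjI exI[of _ hs] refl) auto
qed

lemma discrete_fibration_lift_unique:
  assumes df: "discrete_fibration C D Fo Fa"
    and "f \<in> Arr C" "f' \<in> Arr C" "Cod C f = Cod C f'" "Fa f = Fa f'"
  shows "f = f'"
proof -
  have F: "is_functor C D Fo Fa"
    using df unfolding discrete_fibration_def by blast
  then have "Cod C f \<in> Obj C" "Fa f \<in> Arr D" "Cod D (Fa f) = Fo (Cod C f)"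
    using assms(2) category_dom_cod functor_arr unfolding is_functor_def by auto
  then have "\<exists>!g. g \<in> Arr C \<and> Cod C g = Cod C f \<and> Fa g = Fa f"
    using df unfolding discrete_fibration_def by blast
  then show ?thesis
    using assms(2-5) by metis
qed

lemma discrete_fibration_lift_composable_list:
  assumes df: "discrete_fibration C D Fo Fa"
    and "composable_list D gs" "gs \<noteq> []" "E \<in> Obj C" "Cod D (hd gs) = Fo E"
  shows "\<exists>fs. composable_list C fs \<and> map Fa fs = gs \<and> Cod C (hd fs) = E"
  using assms(2-5)
proof (induction gs arbitrary: E)
  case (Cons g gs)
  have F: "is_functor C D Fo Fa"
    using df unfolding discrete_fibration_def by blast
  obtain f where f: "f \<in> Arr C" "Cod C f = E" "Fa f = g"
    using df Cons.prems unfolding discrete_fibration_def composable_list_Cons by force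
  show ?case
  proof (cases "gs = []")
    case True
    then show ?thesis
      using f by (intro exI[of _ "[f]"]) auto
  next
    case False
    have "Dom C f \<in> Obj C" "Cod D (hd gs) = Fo (Dom C f)"
      using f Cons.prems False category_dom_cod functor_arr[OF F] F
      unfolding composable_list_Cons is_functor_def by auto
    then obtain fs where "composable_list C fs" "map Fa fs = gs" "Cod C (hd fs) = Dom C f"
      using Cons.IH Cons.prems False unfolding composable_list_Cons by blast
    with f False show ?thesis
      by (intro exI[of _ "f # fs"]) (auto simp: composable_list_Cons)
  qed
qed simp

lemma discrete_fibration_composable_list_lift_unique:
  assumes df: "discrete_fibration C D Fo Fa"
    and "composable_list C fs" "composable_list C fs'" "map Fa fs = map Fa fs'"
    "Cod C (hd fs) = Cod C (hd fs')"
  shows "fs = fs'"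
  using assms(2-5)
proof (induction fs arbitrary: fs')
  case (Cons f fs)
  then obtain f' fs2 where fs': "fs' = f' # fs2"
    by (cases fs') auto
  with Cons.prems have "f = f'"
    using discrete_fibration_lift_unique[OF df] by (auto simp: composable_list_Cons)
  moreover have "fs = fs2"
  proof (cases "fs = []")
    case False
    with Cons.prems fs' \<open>f = f'\<close> show ?thesis
      by (intro Cons.IH) (auto simp: composable_list_Cons)
  qed (use Cons.prems fs' in simp)
  ultimately show ?case
    using fs' by simp
qed simp

lemma discrete_fibration_lift_factorization:
  assumes df: "discrete_fibration C D Fo Fa"
    and "p \<in> Arr C" "factorization D (Fa p) gs"
  shows "\<exists>fs. factorization C p fs \<and> map Fa fs = gs"
proof -
  have F: "is_functor C D Fo Fa"
    using df unfolding discrete_fibration_def by blast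
  then have C: "is_category C" and D: "is_category D"
    unfolding is_functor_def by auto
  have gs: "composable_list D gs" "gs \<noteq> []" "length gs \<ge> 2" "comp_list D gs = Fa p"
    using assms(3) by (auto simp: factorization_iff)
  have "Cod D (hd gs) = Fo (Cod C p)"
    using factorization_cod[OF D assms(3)] functor_arr[OF F assms(2)] by simp
  then obtain fs where fs: "composable_list C fs" "map Fa fs = gs" "Cod C (hd fs) = Cod C p"
    using discrete_fibration_lift_composable_list[OF df gs(1,2)] category_dom_cod[OF C assms(2)]
    by blast
  have "fs \<noteq> []"
    using fs(2) gs(2) by auto
  then have "comp_list C fs = p"
    using discrete_fibration_lift_unique[OF df _ assms(2)] comp_list_arr_cod[OF C fs(1)]
      functor_comp_list[OF F fs(1)] fs gs(4) by auto
  then show ?thesis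
    using fs gs(3) by (auto simp: factorization_iff)
qed

lemma discrete_fibration_factorization_lift_unique:
  assumes df: "discrete_fibration C D Fo Fa"
    and "factorization C p fs" "factorization C p fs'" "map Fa fs = map Fa fs'"
  shows "fs = fs'"
proof -
  have C: "is_category C"
    using df unfolding discrete_fibration_def is_functor_def by blast
  show ?thesis
    using discrete_fibration_composable_list_lift_unique[OF df _ _ assms(4)] assms(2,3)
      factorization_cod[OF C] by (auto simp: factorization_iff)
qed

theorem discrete_fibration_imp_almost_discrete_fibration:
  assumes df: "discrete_fibration C D Fo Fa"
  shows "almost_discrete_fibration C D Fo Fa"
  unfolding almost_discrete_fibration_def
proof (intro conjI ballI allI impI)
  show F: "is_functor C D Fo Fa"
    using df unfolding discrete_fibration_def by blast
  fix q p gs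
  assume "p \<in> Arr C" "Fa p = q" and gs: "nontrivial_factorization D q gs"
  then obtain fs where fs: "factorization C p fs" "map Fa fs = gs"
    using discrete_fibration_lift_factorization[OF df] unfolding nontrivial_factorization_def
    by blast
  moreover have "\<not> is_iso C f" if "f \<in> set fs" for f
  proof -
    have "Fa f \<in> set gs"
      using fs(2) that by auto
    then show ?thesis
      using gs functor_preserves_iso[OF F] unfolding nontrivial_factorization_def by blast
  qed
  ultimately show "\<exists>fs. nontrivial_factorization C p fs \<and> map Fa fs = gs"
    unfolding nontrivial_factorization_def by blast
next
  fix q p gs fs fs'
  assume "nontrivial_factorization C p fs \<and> map Fa fs = gs \<and>
    nontrivial_factorization C p fs' \<and> map Fa fs' = gs"
  then have "fs = fs'" "composable_list C fs" "length fs \<ge> 2"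
    using discrete_fibration_factorization_lift_unique[OF df]
    by (auto simp: nontrivial_factorization_def factorization_iff)
  moreover have "is_category C"
    using df unfolding discrete_fibration_def is_functor_def by blast
  ultimately show "fact_equiv C fs fs'"
    using fact_equiv_refl by blast
qed

theorem proposition2p76:
  fixes C :: "('o, 'a) category_data" and D :: "('p, 'b) category_data"
    and Fo :: "'o \<Rightarrow> 'p" and Fa :: "'a \<Rightarrow> 'b"
    and lenC :: "'a \<Rightarrow> nat" and lenD :: "'b \<Rightarrow> nat"
  assumes "indiscretely_based C lenC"
    and "indiscretely_based D lenD"
    and "discrete_fibration C D Fo Fa"
  shows "almost_discrete_fibration C D Fo Fa"
  using discrete_fibration_imp_almost_discrete_fibration[OF assms(3)] .

end
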